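(* The equivalence class (under $\sim$) of any upper prime consists entirely of upper primes of the same length, and the equivalence class of any lower prime consists entirely of lower primes of the same length.
   Context: $\mathcal{A}$ is the free associative $\mathbb{C}$-algebra on noncommuting generators $L,R$; words are finite products of these letters. A word is balanced if it contains equally many $L$'s and $R$'s. $\mathcal{J}$ is the two-sided ideal generated by $\{FG-GF : F,G \text{ nonempty balanced words}\}$, and $X\sim Y$ means $X-Y\in\mathcal{J}$. A word is prime if it is nonempty, balanced, and not a product of two nonempty balanced words. For balanced $W=a_1\cdots a_n$, $e_k(W)=\sum_{i=1}^k\overline{a_i}$ with $\overline{R}=1$, $\overline{L}=-1$. A prime $P$ of length $n$ is an upper prime if $e_k(P)>0$ for $1\le k\le n-1$, and a lower prime if $e_k(P)<0$ for $1\le k\le n-1$. *)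

theory Defs
  imports Complex_Main "HOL-Library.Function_Algebras"
begin

datatype letter = L | R

type_synonym word = "letter list"

text \<open>Elements of the free associative C-algebra on L, R: finitely supported
  coefficient functions on words.\<close>
type_synonym alg = "word \<Rightarrow> complex"

definition fin_supp :: "alg \<Rightarrow> bool" where
  "fin_supp f \<longleftrightarrow> finite {w. f w \<noteq> 0}"

definition wd :: "word \<Rightarrow> alg" where
  "wd w = (\<lambda>x. if x = w then 1 else 0)"

definition amul :: "alg \<Rightarrow> alg \<Rightarrow> alg" where
  "amul f g = (\<lambda>w. \<Sum>p \<in> {(u, v). u @ v = w}. f (fst p) * g (snd p))"

definition balanced :: "word \<Rightarrow> bool" where
  "balanced w \<longleftrightarrow> length (filter (\<lambda>a. a = L) w) = length (filter (\<lambda>a. a = R) w)"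

inductive_set J :: "alg set" where
  gen: "\<lbrakk>F \<noteq> []; G \<noteq> []; balanced F; balanced G\<rbrakk> \<Longrightarrow> wd (F @ G) - wd (G @ F) \<in> J"
| zero: "0 \<in> J"
| add: "\<lbrakk>x \<in> J; y \<in> J\<rbrakk> \<Longrightarrow> x + y \<in> J"
| lmul: "\<lbrakk>fin_supp a; x \<in> J\<rbrakk> \<Longrightarrow> amul a x \<in> J"
| rmul: "\<lbrakk>fin_supp a; x \<in> J\<rbrakk> \<Longrightarrow> amul x a \<in> J"

definition sim :: "alg \<Rightarrow> alg \<Rightarrow> bool" (infix "\<sim>" 50) where
  "X \<sim> Y \<longleftrightarrow> X - Y \<in> J"

fun lval :: "letter \<Rightarrow> int" where
  "lval R = 1" | "lval L = -1"

definition e :: "nat \<Rightarrow> word \<Rightarrow> int" where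
  "e k w = (\<Sum>i<k. lval (w ! i))"

definition prime_word :: "word \<Rightarrow> bool" where
  "prime_word w \<longleftrightarrow> w \<noteq> [] \<and> balanced w \<and>
     \<not> (\<exists>F G. F \<noteq> [] \<and> G \<noteq> [] \<and> balanced F \<and> balanced G \<and> w = F @ G)"

definition upper_prime :: "word \<Rightarrow> bool" where
  "upper_prime P \<longleftrightarrow> prime_word P \<and> (\<forall>k. 1 \<le> k \<and> k \<le> length P - 1 \<longrightarrow> e k P > 0)"

definition lower_prime :: "word \<Rightarrow> bool" where
  "lower_prime P \<longleftrightarrow> prime_word P \<and> (\<forall>k. 1 \<le> k \<and> k \<le> length P - 1 \<longrightarrow> e k P < 0)"

end

theory Submission
  imports Defs
begin

(* Let S be a finite set of words that is closed under swapping two adjacent nonempty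
   balanced factors. Then the linear functional x \<mapsto> \<Sum>w\<in>S. x w kills every generator
   FG - GF of J, and since the left and right quotients {v. u @ v \<in> S}, {u. u @ v \<in> S}
   are again such sets, it kills all of J. Applied to wd W - wd P this gives: if W \<sim> P
   and P \<in> S, then W \<in> S.
   A word is an upper (lower) prime iff it is nonempty, balanced, and the heights of all
   its proper nonempty prefixes are positive (negative). Swapping adjacent balanced
   factors does not change the set of these prefix heights, so the upper (lower) primes
   of a fixed length form a set S as above. *)

definition height :: "word \<Rightarrow> int" where
  "height w = sum_list (map lval w)"

lemma height_Nil [simp]: "height [] = 0"
  by (simp add: height_def)

lemma height_append [simp]: "height (u @ v) = height u + height v"
  by (simp add: height_def)

lemma balanced_iff_height: "balanced w \<longleftrightarrow> height w = 0"
proof -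
  have "height w = int (length (filter (\<lambda>a. a = R) w)) - int (length (filter (\<lambda>a. a = L) w))"
  proof (induction w)
    case (Cons a w)
    then show ?case
      by (cases a) (simp_all add: height_def)
  qed (simp add: height_def)
  then show ?thesis
    unfolding balanced_def by linarith
qed

lemma e_eq_height_take: "k \<le> length w \<Longrightarrow> e k w = height (take k w)"
proof (induction k)
  case (Suc k)
  then show ?case
    by (simp add: e_def height_def take_Suc_conv_app_nth)
qed (simp add: e_def)

definition prefix_heights :: "word \<Rightarrow> int set" where
  "prefix_heights w = {height (take k w) | k. 0 < k \<and> k < length w}"

lemma prefix_heightsI:
  "0 < k \<Longrightarrow> k < length w \<Longrightarrow> height (take k w) = h \<Longrightarrow> h \<in> prefix_heights w"
  unfolding prefix_heights_def by blast

lemma prefix_heights_swap_subset: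
  assumes "F \<noteq> []" "G \<noteq> []" "balanced F" "balanced G"
  shows "prefix_heights (u @ G @ F @ v) \<subseteq> prefix_heights (u @ F @ G @ v)"
proof
  fix h assume "h \<in> prefix_heights (u @ G @ F @ v)"
  then obtain k where k: "0 < k" "k < length (u @ G @ F @ v)"
    and h: "h = height (take k (u @ G @ F @ v))"
    unfolding prefix_heights_def by blast
  have hF: "height F = 0" and hG: "height G = 0"
    using assms by (simp_all add: balanced_iff_height)
  consider "k \<le> length u \<or> length u + length G + length F \<le> k"
    | "length u < k" "k < length u + length G"
    | "k = length u + length G"
    | "length u + length G < k" "k < length u + length G + length F"
    by linarith
  then show "h \<in> prefix_heights (u @ F @ G @ v)"
  proof cases
    case 1
    then show ?thesis
      using k h hF hG by (intro prefix_heightsI[of k]) (auto simp: ac_simps)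
  next
    case 2
    then show ?thesis
      using k h hF by (intro prefix_heightsI[of "k + length F"]) auto
  next
    case 3
    then show ?thesis
      using k h hF hG assms by (intro prefix_heightsI[of "length u + length F"]) auto
  next
    case 4
    then show ?thesis
      using k h hG by (intro prefix_heightsI[of "k - length G"]) (auto simp: ac_simps)
  qed
qed

lemma prime_word_iff_prefix_heights:
  "prime_word w \<longleftrightarrow> w \<noteq> [] \<and> balanced w \<and> 0 \<notin> prefix_heights w"
proof (cases "w \<noteq> [] \<and> balanced w")
  case True
  have "(\<exists>F G. F \<noteq> [] \<and> G \<noteq> [] \<and> balanced F \<and> balanced G \<and> w = F @ G)
        \<longleftrightarrow> 0 \<in> prefix_heights w"
  proof
    assume "\<exists>F G. F \<noteq> [] \<and> G \<noteq> [] \<and> balanced F \<and> balanced G \<and> w = F @ G"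
    then obtain F G where "F \<noteq> []" "G \<noteq> []" "balanced F" "w = F @ G"
      by blast
    then show "0 \<in> prefix_heights w"
      by (intro prefix_heightsI[of "length F"]) (auto simp: balanced_iff_height)
  next
    assume "0 \<in> prefix_heights w"
    then obtain k where "0 < k" "k < length w" "height (take k w) = 0"
      unfolding prefix_heights_def by auto
    moreover have "height (drop k w) = 0"
      using True \<open>height (take k w) = 0\<close> height_append[of "take k w" "drop k w"]
      by (simp add: balanced_iff_height)
    ultimately show "\<exists>F G. F \<noteq> [] \<and> G \<noteq> [] \<and> balanced F \<and> balanced G \<and> w = F @ G"
      by (intro exI[of _ "take k w"] exI[of _ "drop k w"]) (auto simp: balanced_iff_height)
  qed
  then show ?thesis
    using True by (simp add: prime_word_def)
qed (auto simp: prime_word_def)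

lemma all_e_iff_prefix_heights:
  "(\<forall>k. 1 \<le> k \<and> k \<le> length w - 1 \<longrightarrow> Q (e k w)) \<longleftrightarrow> (\<forall>h \<in> prefix_heights w. Q h)"
proof -
  have "1 \<le> k \<and> k \<le> length w - 1 \<longleftrightarrow> 0 < k \<and> k < length w" for k
    by auto
  then show ?thesis
    unfolding prefix_heights_def by (auto simp: e_eq_height_take)
qed

definition excursions :: "int set \<Rightarrow> nat \<Rightarrow> word set" where
  "excursions A n = {w. w \<noteq> [] \<and> length w = n \<and> balanced w \<and> prefix_heights w \<subseteq> A}"

lemma prime_word_e_in_iff_excursion:
  assumes "0 \<notin> A"
  shows "prime_word w \<and> (\<forall>k. 1 \<le> k \<and> k \<le> length w - 1 \<longrightarrow> e k w \<in> A)
           \<longleftrightarrow> w \<in> excursions A (length w)"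
  using assms
  unfolding prime_word_iff_prefix_heights all_e_iff_prefix_heights[where Q = "\<lambda>h. h \<in> A"]
    excursions_def
  by auto

lemma upper_prime_iff_excursion: "upper_prime w \<longleftrightarrow> w \<in> excursions {0<..} (length w)"
  using prime_word_e_in_iff_excursion[of "{0<..}" w] by (simp add: upper_prime_def)

lemma lower_prime_iff_excursion: "lower_prime w \<longleftrightarrow> w \<in> excursions {..<0} (length w)"
  using prime_word_e_in_iff_excursion[of "{..<0}" w] by (simp add: lower_prime_def)

definition swap_closed :: "word set \<Rightarrow> bool" where
  "swap_closed S \<longleftrightarrow> (\<forall>u F G v. F \<noteq> [] \<and> G \<noteq> [] \<and> balanced F \<and> balanced G \<and>
      u @ F @ G @ v \<in> S \<longrightarrow> u @ G @ F @ v \<in> S)"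

lemma swap_closed_left_residual: "swap_closed S \<Longrightarrow> swap_closed {v. u @ v \<in> S}"
  unfolding swap_closed_def by (metis append.assoc mem_Collect_eq)

lemma swap_closed_right_residual: "swap_closed S \<Longrightarrow> swap_closed {u. u @ v \<in> S}"
  unfolding swap_closed_def by simp

lemma swap_closed_excursions: "swap_closed (excursions A n)"
proof -
  have "u @ G @ F @ v \<in> excursions A n"
    if "F \<noteq> []" "G \<noteq> []" "balanced F" "balanced G" "u @ F @ G @ v \<in> excursions A n"
    for u F G v
    using that prefix_heights_swap_subset[OF that(1-4), of u v]
    by (auto simp: excursions_def balanced_iff_height)
  then show ?thesis
    unfolding swap_closed_def by blast
qed

lemma finite_UNIV_letter: "finite (UNIV :: letter set)"
proof -
  have "(UNIV :: letter set) = {L, R}"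
    by (auto intro: letter.exhaust)
  then show ?thesis
    by (metis finite.emptyI finite_insert)
qed

lemma finite_excursions: "finite (excursions A n)"
proof -
  have "finite {w :: word. set w \<subseteq> UNIV \<and> length w = n}"
    using finite_UNIV_letter by (rule finite_lists_length_eq)
  then show ?thesis
    by (rule rev_finite_subset) (auto simp: excursions_def)
qed

lemma finite_splits: "finite {(u, v). u @ v = w}"
proof -
  have "(u, v) \<in> (\<lambda>i. (take i w, drop i w)) ` {..length w}" if "u @ v = w" for u v
    using that by (intro image_eqI[of _ _ "length u"]) auto
  then have "{(u, v). u @ v = w} \<subseteq> (\<lambda>i. (take i w, drop i w)) ` {..length w}"
    by auto
  then show ?thesis
    by (rule finite_subset) simp
qed

lemma finite_append_preimage: "finite S \<Longrightarrow> finite {(u, v). u @ v \<in> S}"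
proof -
  have "{(u, v). u @ v \<in> S} = (\<Union>w\<in>S. {(u, v). u @ v = w})"
    by auto
  then show "finite S \<Longrightarrow> ?thesis"
    using finite_splits by auto
qed

lemma sum_amul_pairs:
  assumes "finite S"
  shows "(\<Sum>w\<in>S. amul a b w) = (\<Sum>(u, v) | u @ v \<in> S. a u * b v)"
proof -
  have pairs_UN: "{(u, v). u @ v \<in> S} = (\<Union>w\<in>S. {(u, v). u @ v = w})"
    by auto
  show ?thesis
    unfolding amul_def pairs_UN using assms finite_splits
    by (subst sum.UNION_disjoint) (auto simp: case_prod_unfold)
qed

lemma sum_amul_left:
  assumes "finite S"
  shows "(\<Sum>w\<in>S. amul a b w) = (\<Sum>u \<in> {u. \<exists>v. u @ v \<in> S}. a u * (\<Sum>v | u @ v \<in> S. b v))"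
proof -
  let ?U = "{u. \<exists>v. u @ v \<in> S}"
  have "?U = fst ` {(u, v). u @ v \<in> S}"
    by force
  then have "finite ?U"
    using finite_append_preimage[OF assms] by simp
  moreover have "finite {v. u @ v \<in> S}" for u
    using assms by (rule finite_subset[rotated, OF finite_imageI[of _ "drop (length u)"]]) force
  moreover have "{(u, v). u @ v \<in> S} = (SIGMA u:?U. {v. u @ v \<in> S})"
    by auto
  ultimately show ?thesis
    by (simp add: sum_amul_pairs[OF assms] sum.Sigma sum_distrib_left)
qed

lemma sum_amul_right:
  assumes "finite S"
  shows "(\<Sum>w\<in>S. amul a b w) = (\<Sum>v \<in> {v. \<exists>u. u @ v \<in> S}. (\<Sum>u | u @ v \<in> S. a u) * b v)"
proof -
  let ?U = "{u. \<exists>v. u @ v \<in> S}" and ?V = "{v. \<exists>u. u @ v \<in> S}"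
  have "?U = fst ` {(u, v). u @ v \<in> S}" "?V = snd ` {(u, v). u @ v \<in> S}"
    by force+
  then have fin: "finite ?U" "finite ?V"
    using finite_append_preimage[OF assms] by simp_all
  have "(\<Sum>w\<in>S. amul a b w) = (\<Sum>u\<in>?U. \<Sum>v | v \<in> ?V \<and> u @ v \<in> S. a u * b v)"
    unfolding sum_amul_left[OF assms] sum_distrib_left by (intro sum.cong) auto
  also have "\<dots> = (\<Sum>v\<in>?V. \<Sum>u | u \<in> ?U \<and> u @ v \<in> S. a u * b v)"
    using fin by (rule sum.swap_restrict)
  also have "\<dots> = (\<Sum>v\<in>?V. (\<Sum>u | u @ v \<in> S. a u) * b v)"
    unfolding sum_distrib_right by (intro sum.cong) auto
  finally show ?thesis .
qed

lemma J_sum_swap_closed_eq_0: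
  assumes "x \<in> J" "swap_closed S"
  shows "(\<Sum>w\<in>S. x w) = 0"
  using assms
proof (induction arbitrary: S)
  case (gen F G)
  then have "F @ G \<in> S \<longleftrightarrow> G @ F \<in> S"
    unfolding swap_closed_def by (metis append_Nil append_Nil2)
  then show ?case
    by (cases "finite S") (simp_all add: wd_def sum_subtractf)
next
  case (lmul a x)
  show ?case
  proof (cases "finite S")
    case True
    have "(\<Sum>v | u @ v \<in> S. x v) = 0" for u
      using lmul.IH swap_closed_left_residual[OF lmul.prems] by simp
    then show ?thesis
      using True by (simp add: sum_amul_left)
  qed simp
next
  case (rmul a x)
  show ?case
  proof (cases "finite S")
    case True
    have "(\<Sum>u | u @ v \<in> S. x u) = 0" for v
      using rmul.IH swap_closed_right_residual[OF rmul.prems] by simp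
    then show ?thesis
      using True by (simp add: sum_amul_right)
  qed simp
qed (simp_all add: sum.distrib)

lemma mem_swap_closed_if_wd_sim:
  assumes "wd W \<sim> wd P" "finite S" "swap_closed S" "P \<in> S"
  shows "W \<in> S"
proof -
  have "wd W - wd P \<in> J"
    using assms(1) by (simp add: sim_def)
  then have "(\<Sum>w\<in>S. (wd W - wd P) w) = 0"
    using assms(3) by (rule J_sum_swap_closed_eq_0)
  then show ?thesis
    using assms(2,4) by (simp add: wd_def sum_subtractf split: if_splits)
qed

theorem lemma5p6:
  shows "(\<forall>P W. upper_prime P \<and> wd W \<sim> wd P \<longrightarrow> upper_prime W \<and> length W = length P) \<and>
         (\<forall>P W. lower_prime P \<and> wd W \<sim> wd P \<longrightarrow> lower_prime W \<and> length W = length P)"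
proof -
  have excursion_class: "W \<in> excursions A (length P)"
    if "P \<in> excursions A (length P)" "wd W \<sim> wd P" for A P W
    using mem_swap_closed_if_wd_sim that finite_excursions swap_closed_excursions by blast
  have length_eq: "W \<in> excursions A n \<Longrightarrow> length W = n" for A n W
    by (simp add: excursions_def)
  show ?thesis
    using excursion_class length_eq
    unfolding upper_prime_iff_excursion lower_prime_iff_excursion by metis
qed

end
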